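(* Let $d,s\ge1$ be integers and let $f$ be a real-valued trigonometric polynomial on $[0,1]^d$ with $\hat f(\omega)=0$ whenever $\|\omega\|_\infty>2s$, with minimal value $f_\ast$. Suppose $g=\sum_{j=1}^N|q_j|^2$ for finitely many trigonometric polynomials $q_j$ of degree at most $s$, and $\|f-f_\ast-g\|_{\rm F}\le\varepsilon'$. Then \[ 0\le f_\ast-c_\ast(f,s)\le(2s+1)^d\varepsilon'. \]
   Context: Fourier coefficients $\hat f(\omega)=\int_{[0,1]^d}f(x)e^{-2i\pi\omega^\top x}dx$; F-norm $\|h\|_{\rm F}=\sum_{\omega\in\mathbb Z^d}|\hat h(\omega)|$. A trigonometric polynomial of degree at most $s$ is $q(x)=\sum_{\omega\in\mathbb Z^d,\|\omega\|_\infty\le s}a_\omega e^{2i\pi\omega^\top x}$ with $a_\omega\in\mathbb C$. $c_\ast(f,s)$ is the supremum of $c\in\mathbb R$ such that $f-c=\sum_{j}|q_j|^2$ for finitely many trigonometric polynomials $q_j$ of degree at most $s$. *)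

theory Defs
  imports "HOL-Analysis.Analysis"
begin

definition freq_dot :: "int^'d \<Rightarrow> real^'d \<Rightarrow> real" where
  "freq_dot \<omega> x = (\<Sum>i\<in>UNIV. of_int (\<omega> $ i) * x $ i)"

definition sup_norm_int :: "int^'d \<Rightarrow> int" where
  "sup_norm_int \<omega> = Max ((\<lambda>i. \<bar>\<omega> $ i\<bar>) ` UNIV)"

definition fourier_coeff :: "(real^'d \<Rightarrow> complex) \<Rightarrow> int^'d \<Rightarrow> complex" where
  "fourier_coeff h \<omega> = integral (cbox 0 One) (\<lambda>x. h x * cis (- 2 * pi * freq_dot \<omega> x))"

definition F_norm :: "(real^'d \<Rightarrow> complex) \<Rightarrow> real" where
  "F_norm h = (\<Sum>\<^sub>\<infinity>\<omega>\<in>UNIV. norm (fourier_coeff h \<omega>))"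

definition trig_poly_deg :: "nat \<Rightarrow> (real^'d \<Rightarrow> complex) \<Rightarrow> bool" where
  "trig_poly_deg s q \<longleftrightarrow> (\<exists>a :: int^'d \<Rightarrow> complex. \<forall>x.
      q x = (\<Sum>\<omega>\<in>{\<omega>. sup_norm_int \<omega> \<le> int s}. a \<omega> * cis (2 * pi * freq_dot \<omega> x)))"

definition c_star :: "(real^'d \<Rightarrow> real) \<Rightarrow> nat \<Rightarrow> real" where
  "c_star f s = Sup {c. \<exists>qs. (\<forall>q\<in>set qs. trig_poly_deg s q) \<and>
      (\<forall>x. f x - c = (\<Sum>q\<leftarrow>qs. (cmod (q x))\<^sup>2))}"

end

theory Submission imports Defs begin

text \<open>
  Write \<open>f - f\<^sub>* - g = R\<close> with \<open>R = \<Sum>\<^sub>\<nu> r\<^sub>\<nu> e\<^sub>\<nu>\<close>, a trigonometric polynomial of degree at most \<open>2s\<close>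
  with \<open>\<Sum>\<^sub>\<nu> |r\<^sub>\<nu>| \<le> \<epsilon>'\<close>. Splitting \<open>\<nu> = \<alpha> - \<beta>\<close> with \<open>\<alpha>, \<beta>\<close> of degree at most \<open>s\<close>, each term
  \<open>|r\<^sub>\<nu>| + Re (r\<^sub>\<nu> e\<^sub>\<nu>)\<close> is the squared modulus \<open>|t \<sigma> e\<^sub>\<alpha> + t e\<^sub>\<beta>|\<^sup>2\<close> with \<open>t\<^sup>2 = |r\<^sub>\<nu>|/2\<close> and
  \<open>\<sigma> = r\<^sub>\<nu>/|r\<^sub>\<nu>|\<close>. Hence \<open>R + \<epsilon>'\<close> is a sum of squares of degree \<open>s\<close>, so \<open>f - (f\<^sub>* - \<epsilon>')\<close> is one
  as well and \<open>c\<^sub>*(f,s) \<ge> f\<^sub>* - \<epsilon>'\<close>; this is even stronger than the claimed bound with the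
  factor \<open>(2s+1)\<^sup>d\<close>.
\<close>

definition fourier_char :: "int^'d \<Rightarrow> real^'d \<Rightarrow> complex" where
  "fourier_char \<omega> x = cis (2 * pi * freq_dot \<omega> x)"

lemma freq_dot_add: "freq_dot (a + b) x = freq_dot a x + freq_dot b x"
  by (simp add: freq_dot_def sum.distrib distrib_right)

lemma freq_dot_uminus: "freq_dot (- a) x = - freq_dot a x"
  by (simp add: freq_dot_def sum_negf)

lemma freq_dot_diff: "freq_dot (a - b) x = freq_dot a x - freq_dot b x"
  by (simp add: freq_dot_def sum_subtractf left_diff_distrib)

lemma freq_dot_translate_axis:
  "freq_dot a (x + c *\<^sub>R axis i 1) = freq_dot a x + of_int (a $ i) * c"
proof -
  have "freq_dot a (x + c *\<^sub>R axis i 1)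
      = freq_dot a x + (\<Sum>j\<in>UNIV. of_int (a $ j) * (if j = i then c else 0))"
    by (simp add: freq_dot_def sum.distrib distrib_left axis_def; intro sum.cong; auto)
  then show ?thesis
    by (simp add: if_distrib cong: if_cong)
qed

lemma fourier_char_zero [simp]: "fourier_char 0 x = 1"
  by (simp add: fourier_char_def freq_dot_def)

lemma norm_fourier_char [simp]: "norm (fourier_char a x) = 1"
  by (simp add: fourier_char_def)

lemma fourier_char_add: "fourier_char (a + b) x = fourier_char a x * fourier_char b x"
  by (simp add: fourier_char_def freq_dot_add distrib_left cis_mult)

lemma fourier_char_diff: "fourier_char (a - b) x = fourier_char a x * cnj (fourier_char b x)"
  by (simp add: fourier_char_def freq_dot_diff right_diff_distrib cis_cnj cis_mult)

lemma cnj_fourier_char: "cnj (fourier_char a x) = fourier_char (- a) x"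
  by (simp add: fourier_char_def freq_dot_uminus cis_cnj)

lemma fourier_char_translate_axis:
  "fourier_char a (x + c *\<^sub>R axis i 1) = fourier_char a x * cis (2 * pi * of_int (a $ i) * c)"
  by (simp add: fourier_char_def freq_dot_translate_axis distrib_left cis_mult mult.assoc)

lemma continuous_on_fourier_char: "continuous_on S (fourier_char a)"
  unfolding fourier_char_def freq_dot_def
  by (intro continuous_on_compose2[OF continuous_on_cis] continuous_intros) auto

lemma integrable_fourier_char: "fourier_char a integrable_on cbox u v"
  by (intro integrable_continuous continuous_on_fourier_char)

subsection \<open>Orthogonality of the characters on the unit cube\<close>

lemma One_nth [simp]: "(One :: real^'n) $ i = 1"
proof -
  have "axis i (1::real) \<in> Basis" by (simp add: cart_basis_def)
  then show ?thesis by (metis cart_eq_inner_axis inner_sum_Basis)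
qed

text \<open>The simplifier sometimes unfolds \<open>One $ i\<close> to this sum before \<open>One_nth\<close> applies.\<close>
lemma sum_Basis_cart_nth [simp]: "(\<Sum>x\<in>(Basis :: (real^'n) set). x $ i) = 1"
  using One_nth[of i] by simp

lemma cbox_inter_halfspace_axis:
  fixes a b :: "real^'d"
  shows "cbox a b \<inter> {x. x \<bullet> axis i 1 \<le> c} = cbox a (\<chi> j. if j = i then min c (b $ i) else b $ j)"
    and "cbox a b \<inter> {x. x \<bullet> axis i 1 \<ge> c} = cbox (\<chi> j. if j = i then max c (a $ i) else a $ j) b"
  by (intro set_eqI; simp add: mem_box_cart inner_axis; smt (verit))+

lemma integral_translate_cbox:
  fixes h :: "real^'d \<Rightarrow> complex"
  assumes "continuous_on UNIV h"
  shows "integral (cbox a b) (\<lambda>x. h (x + c)) = integral (cbox (a + c) (b + c)) h"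
proof -
  have "(h has_integral integral (cbox (a + c) (b + c)) h) (cbox (a + c) (b + c))"
    using assms by (intro integrable_integral integrable_continuous) (auto intro: continuous_on_subset)
  from has_integral_affinity'[OF this, of 1 c] show ?thesis
    by (intro integral_unique) simp
qed

text \<open>Cut the cube at \<open>x\<^sub>i = t\<close> and move the lower slab up by one period.\<close>
lemma integral_unit_cube_translate_periodic:
  fixes h :: "real^'d \<Rightarrow> complex"
  assumes cont: "continuous_on UNIV h" and per: "\<And>x. h (x + axis i 1) = h x"
    and t: "0 \<le> t" "t \<le> 1"
  shows "integral (cbox 0 One) (\<lambda>x. h (x + t *\<^sub>R axis i 1)) = integral (cbox 0 One) h"
proof -
  define u :: "real^'d" where "u = axis i 1"
  have int: "h integrable_on cbox a b" for a b
    using cont by (intro integrable_continuous) (auto intro: continuous_on_subset)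
  have u: "u \<in> Basis" by (simp add: u_def cart_basis_def)
  have split: "integral (cbox a b) h = integral (cbox a (\<chi> j. if j = i then min c (b $ i) else b $ j)) h
      + integral (cbox (\<chi> j. if j = i then max c (a $ i) else a $ j) b) h" for a b c
    using integral_split[OF int u, of a b c] by (simp add: u_def cbox_inter_halfspace_axis)
  have vec: "(\<chi> j. if j = i then min 1 ((One + t *\<^sub>R u) $ i) else (One + t *\<^sub>R u) $ j) = One"
    "(\<chi> j. if j = i then max 1 ((t *\<^sub>R u) $ i) else (t *\<^sub>R u) $ j) = 0 + u"
    "(\<chi> j. if j = i then min t (One $ i) else One $ j) = One + t *\<^sub>R u - u"
    "(\<chi> j. if j = i then max t ((0::real^'d) $ i) else 0 $ j) = t *\<^sub>R u"
    using t by (auto simp: vec_eq_iff u_def axis_def)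
  have "integral (cbox 0 One) (\<lambda>x. h (x + t *\<^sub>R u)) = integral (cbox (t *\<^sub>R u) (One + t *\<^sub>R u)) h"
    using integral_translate_cbox[OF cont, of 0 One "t *\<^sub>R u"] by simp
  also have "\<dots> = integral (cbox (t *\<^sub>R u) One) h + integral (cbox (0 + u) ((One + t *\<^sub>R u - u) + u)) h"
    using split[of "t *\<^sub>R u" "One + t *\<^sub>R u" 1] by (simp only: vec) simp
  also have "integral (cbox (0 + u) ((One + t *\<^sub>R u - u) + u)) h = integral (cbox 0 (One + t *\<^sub>R u - u)) h"
    using integral_translate_cbox[OF cont, of 0 "One + t *\<^sub>R u - u" u] per by (simp add: u_def)
  also have "integral (cbox (t *\<^sub>R u) One) h + \<dots> = integral (cbox 0 One) h"
    using split[of 0 One t] by (simp only: vec) (simp add: add.commute)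
  finally show ?thesis by (simp add: u_def)
qed

text \<open>A shift by half a period in a direction with \<open>\<nu>\<^sub>i \<noteq> 0\<close> negates the integral.\<close>
lemma integral_fourier_char:
  "integral (cbox 0 One) (fourier_char \<nu>) = (if \<nu> = 0 then 1 else 0)"
proof (cases "\<nu> = 0")
  case True
  then have "fourier_char \<nu> = (\<lambda>x. 1)" by (simp add: fun_eq_iff)
  then show ?thesis using True by simp
next
  case False
  then obtain i where ni: "\<nu> $ i \<noteq> 0" by (metis vec_eq_iff zero_index)
  define t :: real where "t = 1 / (2 * \<bar>of_int (\<nu> $ i)\<bar>)"
  have abs1: "\<bar>real_of_int (\<nu> $ i)\<bar> \<ge> 1" using ni by linarith
  have t: "0 \<le> t" "t \<le> 1" using abs1 by (auto simp: t_def field_simps)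
  have half_period: "cis (2 * pi * of_int (\<nu> $ i) * t) = -1"
  proof (cases "\<nu> $ i > 0")
    case True
    then have "2 * pi * of_int (\<nu> $ i) * t = pi" using abs1 by (simp add: t_def field_simps)
    then show ?thesis using cis_pi by metis
  next
    case False
    then have "2 * pi * of_int (\<nu> $ i) * t = - pi" using abs1 ni by (simp add: t_def field_simps)
    moreover have "cis (- pi) = -1" by (simp add: cis_cnj[symmetric])
    ultimately show ?thesis by metis
  qed
  have full_period: "cis (2 * pi * of_int (\<nu> $ i) * 1) = 1"
    by (metis Ints_of_int cis_multiple_2pi mult.right_neutral)
  have period: "fourier_char \<nu> (x + axis i 1) = fourier_char \<nu> x" for x
    using fourier_char_translate_axis[of \<nu> x 1 i] full_period by simp
  have "- integral (cbox 0 One) (fourier_char \<nu>)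
      = integral (cbox 0 One) (\<lambda>x. fourier_char \<nu> (x + t *\<^sub>R axis i 1))"
    by (simp add: fourier_char_translate_axis half_period)
  also have "\<dots> = integral (cbox 0 One) (fourier_char \<nu>)"
    by (rule integral_unit_cube_translate_periodic[OF continuous_on_fourier_char period t])
  finally show ?thesis using False by simp
qed

lemma has_integral_fourier_char:
  "(fourier_char \<omega> has_integral (if \<omega> = 0 then 1 else 0)) (cbox 0 One)"
  using integrable_integral[OF integrable_fourier_char, of \<omega> 0 One]
  unfolding integral_fourier_char .

lemma fourier_coeff_sum_fourier_char:
  assumes "finite K" and h: "\<And>x. h x = (\<Sum>\<omega>\<in>K. b \<omega> * fourier_char \<omega> x)"
  shows "fourier_coeff h \<nu> = (if \<nu> \<in> K then b \<nu> else 0)"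
proof -
  have integrand: "h x * cis (- 2 * pi * freq_dot \<nu> x) = (\<Sum>\<omega>\<in>K. b \<omega> * fourier_char (\<omega> - \<nu>) x)" for x
  proof -
    have "cis (- 2 * pi * freq_dot \<nu> x) = cnj (fourier_char \<nu> x)"
      by (simp add: fourier_char_def cis_cnj)
    then show ?thesis by (simp add: h sum_distrib_right fourier_char_diff mult.assoc)
  qed
  have "((\<lambda>x. \<Sum>\<omega>\<in>K. b \<omega> * fourier_char (\<omega> - \<nu>) x) has_integral
      (\<Sum>\<omega>\<in>K. b \<omega> * (if \<omega> - \<nu> = 0 then 1 else 0))) (cbox 0 One)"
    by (intro has_integral_sum assms has_integral_mult_right has_integral_fourier_char)
  then have "fourier_coeff h \<nu> = (\<Sum>\<omega>\<in>K. b \<omega> * (if \<omega> - \<nu> = 0 then 1 else 0))"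
    unfolding fourier_coeff_def integrand by (rule integral_unique)
  also have "\<dots> = (\<Sum>\<omega>\<in>K. if \<omega> = \<nu> then b \<omega> else 0)"
    by (intro sum.cong) auto
  finally show ?thesis
    using assms(1) by (simp add: sum.delta')
qed

subsection \<open>Trigonometric polynomials with prescribed spectrum\<close>

definition trig_poly_on :: "(int^'d) set \<Rightarrow> (real^'d \<Rightarrow> complex) \<Rightarrow> bool" where
  "trig_poly_on K h \<longleftrightarrow> (\<exists>b. \<forall>x. h x = (\<Sum>\<omega>\<in>K. b \<omega> * fourier_char \<omega> x))"

lemma trig_poly_on_fourier_expansion:
  assumes "finite K" "trig_poly_on K h"
  shows "h x = (\<Sum>\<omega>\<in>K. fourier_coeff h \<omega> * fourier_char \<omega> x)"
proof -
  obtain b where b: "\<And>x. h x = (\<Sum>\<omega>\<in>K. b \<omega> * fourier_char \<omega> x)"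
    using assms(2) unfolding trig_poly_on_def by blast
  show ?thesis
    unfolding b[of x] using fourier_coeff_sum_fourier_char[OF assms(1) b] by (intro sum.cong) auto
qed

lemma fourier_coeff_outside_spectrum:
  assumes "finite K" "trig_poly_on K h" "\<nu> \<notin> K"
  shows "fourier_coeff h \<nu> = 0"
  using assms fourier_coeff_sum_fourier_char[of K h] unfolding trig_poly_on_def by force

lemma trig_poly_on_mono:
  assumes "finite L" "K \<subseteq> L" "trig_poly_on K h"
  shows "trig_poly_on L h"
proof -
  obtain b where b: "\<And>x. h x = (\<Sum>\<omega>\<in>K. b \<omega> * fourier_char \<omega> x)"
    using assms(3) unfolding trig_poly_on_def by blast
  have expansion: "h x = (\<Sum>\<omega>\<in>L. (if \<omega> \<in> K then b \<omega> else 0) * fourier_char \<omega> x)" for x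
    unfolding b using assms(1,2) by (intro sum.mono_neutral_cong_left) auto
  show ?thesis unfolding trig_poly_on_def by (intro exI allI) (rule expansion)
qed

lemma trig_poly_on_restrict:
  assumes "finite K" "finite L" "trig_poly_on K h" "\<And>\<nu>. \<nu> \<in> K - L \<Longrightarrow> fourier_coeff h \<nu> = 0"
  shows "trig_poly_on L h"
proof -
  have "h x = (\<Sum>\<omega>\<in>K \<inter> L. fourier_coeff h \<omega> * fourier_char \<omega> x)" for x
    unfolding trig_poly_on_fourier_expansion[OF assms(1,3), of x]
    using assms(1,4) by (intro sum.mono_neutral_right) auto
  then have "trig_poly_on (K \<inter> L) h" unfolding trig_poly_on_def by blast
  then show ?thesis by (rule trig_poly_on_mono[OF assms(2) inf_le2])
qed

lemma trig_poly_on_zero: "trig_poly_on K (\<lambda>x. 0)"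
  unfolding trig_poly_on_def by (rule exI[of _ "\<lambda>_. 0"]) simp

lemma trig_poly_on_monomial:
  assumes "finite K" "\<alpha> \<in> K"
  shows "trig_poly_on K (\<lambda>x. c * fourier_char \<alpha> x)"
proof -
  have expansion: "c * fourier_char \<alpha> x = (\<Sum>\<omega>\<in>K. (if \<omega> = \<alpha> then c else 0) * fourier_char \<omega> x)" for x
  proof -
    have "(\<Sum>\<omega>\<in>K. (if \<omega> = \<alpha> then c else 0) * fourier_char \<omega> x)
        = (\<Sum>\<omega>\<in>K. if \<omega> = \<alpha> then c * fourier_char \<omega> x else 0)"
      by (intro sum.cong) auto
    then show ?thesis using assms by (simp add: sum.delta')
  qed
  show ?thesis unfolding trig_poly_on_def by (intro exI allI) (rule expansion)
qed

lemma trig_poly_on_const: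
  assumes "finite K" "0 \<in> K"
  shows "trig_poly_on K (\<lambda>x. c)"
  using trig_poly_on_monomial[OF assms, of c] by simp

lemma trig_poly_on_add:
  assumes "trig_poly_on K h" "trig_poly_on K g"
  shows "trig_poly_on K (\<lambda>x. h x + g x)"
proof -
  obtain b c where "\<And>x. h x = (\<Sum>\<omega>\<in>K. b \<omega> * fourier_char \<omega> x)"
    "\<And>x. g x = (\<Sum>\<omega>\<in>K. c \<omega> * fourier_char \<omega> x)"
    using assms unfolding trig_poly_on_def by blast
  then have expansion: "h x + g x = (\<Sum>\<omega>\<in>K. (b \<omega> + c \<omega>) * fourier_char \<omega> x)" for x
    by (simp add: sum.distrib distrib_right)
  show ?thesis unfolding trig_poly_on_def by (intro exI allI) (rule expansion)
qed

lemma trig_poly_on_diff: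
  assumes "trig_poly_on K h" "trig_poly_on K g"
  shows "trig_poly_on K (\<lambda>x. h x - g x)"
proof -
  obtain b c where "\<And>x. h x = (\<Sum>\<omega>\<in>K. b \<omega> * fourier_char \<omega> x)"
    "\<And>x. g x = (\<Sum>\<omega>\<in>K. c \<omega> * fourier_char \<omega> x)"
    using assms unfolding trig_poly_on_def by blast
  then have expansion: "h x - g x = (\<Sum>\<omega>\<in>K. (b \<omega> - c \<omega>) * fourier_char \<omega> x)" for x
    by (simp add: sum_subtractf left_diff_distrib)
  show ?thesis unfolding trig_poly_on_def by (intro exI allI) (rule expansion)
qed

lemma trig_poly_on_sum_list:
  assumes "\<And>q. q \<in> set qs \<Longrightarrow> trig_poly_on K (F q)"
  shows "trig_poly_on K (\<lambda>x. \<Sum>q\<leftarrow>qs. F q x)"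
  using assms by (induction qs) (simp_all add: trig_poly_on_zero trig_poly_on_add)

lemma trig_poly_on_cnj:
  assumes "trig_poly_on K h"
  shows "trig_poly_on (uminus ` K) (\<lambda>x. cnj (h x))"
proof -
  obtain b where b: "\<And>x. h x = (\<Sum>\<omega>\<in>K. b \<omega> * fourier_char \<omega> x)"
    using assms unfolding trig_poly_on_def by blast
  have expansion: "cnj (h x) = (\<Sum>\<omega>\<in>uminus ` K. cnj (b (- \<omega>)) * fourier_char \<omega> x)" for x
    unfolding b by (simp add: sum.reindex cnj_fourier_char)
  show ?thesis unfolding trig_poly_on_def by (intro exI allI) (rule expansion)
qed

lemma trig_poly_on_mult:
  fixes K L :: "(int^'d) set"
  assumes "finite K" "finite L" "trig_poly_on K h" "trig_poly_on L g"
  shows "trig_poly_on ((\<lambda>(\<alpha>, \<beta>). \<alpha> + \<beta>) ` (K \<times> L)) (\<lambda>x. h x * g x)"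
proof -
  obtain b c where b: "\<And>x. h x = (\<Sum>\<omega>\<in>K. b \<omega> * fourier_char \<omega> x)"
    and c: "\<And>x. g x = (\<Sum>\<omega>\<in>L. c \<omega> * fourier_char \<omega> x)"
    using assms(3,4) unfolding trig_poly_on_def by blast
  define plus where "plus = (\<lambda>(\<alpha>::int^'d, \<beta>). \<alpha> + \<beta>)"
  define d where "d \<nu> = (\<Sum>p\<in>{p\<in>K \<times> L. plus p = \<nu>}. b (fst p) * c (snd p))" for \<nu>
  have "h x * g x = (\<Sum>\<nu>\<in>plus ` (K \<times> L). d \<nu> * fourier_char \<nu> x)" for x
  proof -
    have "h x * g x = (\<Sum>p\<in>K \<times> L. b (fst p) * c (snd p) * fourier_char (plus p) x)"
      unfolding b c sum_product sum.cartesian_product plus_def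
      by (intro sum.cong) (auto simp: fourier_char_add mult_ac)
    also have "\<dots> = (\<Sum>\<nu>\<in>plus ` (K \<times> L).
        \<Sum>p\<in>{p\<in>K \<times> L. plus p = \<nu>}. b (fst p) * c (snd p) * fourier_char (plus p) x)"
      by (rule sum.image_gen[OF finite_cartesian_product[OF assms(1,2)]])
    also have "\<dots> = (\<Sum>\<nu>\<in>plus ` (K \<times> L). d \<nu> * fourier_char \<nu> x)"
      unfolding d_def sum_distrib_right by (intro sum.cong refl) auto
    finally show ?thesis .
  qed
  then show ?thesis unfolding trig_poly_on_def plus_def by blast
qed

lemma fourier_coeff_diff_trig_poly_on:
  assumes "finite K" "trig_poly_on K h" "trig_poly_on K g"
  shows "fourier_coeff (\<lambda>x. h x - g x) \<nu> = fourier_coeff h \<nu> - fourier_coeff g \<nu>"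
proof -
  have "h x - g x = (\<Sum>\<omega>\<in>K. (fourier_coeff h \<omega> - fourier_coeff g \<omega>) * fourier_char \<omega> x)" for x
    using assms by (simp add: trig_poly_on_fourier_expansion[of K] sum_subtractf left_diff_distrib)
  from fourier_coeff_sum_fourier_char[OF assms(1) this] show ?thesis
    using assms by (auto simp: fourier_coeff_outside_spectrum)
qed

lemma F_norm_trig_poly_on:
  assumes "finite K" "trig_poly_on K h"
  shows "F_norm h = (\<Sum>\<omega>\<in>K. norm (fourier_coeff h \<omega>))"
proof -
  have "F_norm h = (\<Sum>\<^sub>\<infinity>\<omega>\<in>K. norm (fourier_coeff h \<omega>))"
    unfolding F_norm_def
    by (rule infsum_cong_neutral) (use assms fourier_coeff_outside_spectrum in auto)
  then show ?thesis using assms(1) by simp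
qed

definition freq_box :: "nat \<Rightarrow> (int^'d) set" where
  "freq_box n = {\<omega>. sup_norm_int \<omega> \<le> int n}"

lemma trig_poly_on_freq_box_iff: "trig_poly_on (freq_box s) h \<longleftrightarrow> trig_poly_deg s h"
  unfolding trig_poly_deg_def trig_poly_on_def freq_box_def fourier_char_def ..

lemma mem_freq_box: "\<omega> \<in> freq_box n \<longleftrightarrow> (\<forall>i. \<bar>\<omega> $ i\<bar> \<le> int n)"
  unfolding freq_box_def sup_norm_int_def by (subst Max_le_iff) auto

lemma zero_in_freq_box [simp]: "0 \<in> freq_box n"
  by (simp add: mem_freq_box)

lemma freq_box_mono: "n \<le> m \<Longrightarrow> freq_box n \<subseteq> freq_box m"
  by (auto simp: mem_freq_box) (meson of_nat_le_iff order_trans)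

lemma finite_freq_box [simp]: "finite (freq_box n :: (int^'d) set)"
proof (rule finite_subset)
  show "freq_box n \<subseteq> vec_lambda ` (PiE UNIV (\<lambda>_::'d. {- int n..int n}))"
  proof
    fix \<omega> :: "int^'d" assume "\<omega> \<in> freq_box n"
    then have "(\<lambda>i. \<omega> $ i) \<in> PiE UNIV (\<lambda>_::'d. {- int n..int n})"
      by (auto simp: mem_freq_box abs_le_iff) (meson minus_le_iff)
    then show "\<omega> \<in> vec_lambda ` (PiE UNIV (\<lambda>_::'d. {- int n..int n}))"
      by (metis image_eqI vec_lambda_eta)
  qed
qed (intro finite_imageI finite_PiE; simp)

lemma freq_box_diff_subset:
  "(\<lambda>(\<alpha>, \<beta>). \<alpha> + \<beta>) ` (freq_box s \<times> uminus ` freq_box s) \<subseteq> freq_box (2 * s)"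
proof (clarsimp simp: mem_freq_box)
  fix \<alpha> \<beta> :: "int^'d" and i
  assume "\<forall>i. \<bar>\<alpha> $ i\<bar> \<le> int s" "\<forall>i. \<bar>\<beta> $ i\<bar> \<le> int s"
  then have "\<bar>\<alpha> $ i\<bar> \<le> int s" "\<bar>\<beta> $ i\<bar> \<le> int s" by blast+
  then show "\<bar>\<alpha> $ i - \<beta> $ i\<bar> \<le> 2 * int s" by linarith
qed

lemma freq_box_double_split:
  assumes "\<nu> \<in> freq_box (2 * s)"
  obtains \<alpha> \<beta> where "\<alpha> \<in> freq_box s" "\<beta> \<in> freq_box s" "\<nu> = \<alpha> - \<beta>"
proof
  have bound: "\<bar>\<nu> $ i\<bar> \<le> 2 * int s" for i using assms by (simp add: mem_freq_box)
  have "\<bar>\<nu> $ i div 2\<bar> \<le> int s \<and> \<bar>\<nu> $ i div 2 - \<nu> $ i\<bar> \<le> int s" for i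
    using bound[of i] by presburger
  then show "(\<chi> i. \<nu> $ i div 2) \<in> freq_box s" "(\<chi> i. \<nu> $ i div 2) - \<nu> \<in> freq_box s"
    by (simp_all add: mem_freq_box)
qed simp

lemma trig_poly_deg_norm_square:
  assumes "trig_poly_deg s q"
  shows "trig_poly_on (freq_box (2 * s)) (\<lambda>x. q x * cnj (q x))"
proof (rule trig_poly_on_mono[OF finite_freq_box freq_box_diff_subset])
  show "trig_poly_on ((\<lambda>(\<alpha>, \<beta>). \<alpha> + \<beta>) ` (freq_box s \<times> uminus ` freq_box s)) (\<lambda>x. q x * cnj (q x))"
    using assms unfolding trig_poly_on_freq_box_iff[symmetric]
    by (intro trig_poly_on_mult trig_poly_on_cnj finite_imageI finite_freq_box)
qed

subsection \<open>Sums of squares from the F-norm\<close>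

lemma norm_square_balanced_sum:
  fixes c e1 e2 :: complex
  assumes "norm e1 = 1" "norm e2 = 1"
  defines "t \<equiv> sqrt (cmod c / 2)" and "\<sigma> \<equiv> (if c = 0 then 1 else c / cmod c)"
  shows "(cmod (of_real t * \<sigma> * e1 + of_real t * e2))\<^sup>2 = cmod c + Re (c * (e1 * cnj e2))"
proof (cases "c = 0")
  case False
  have \<sigma>: "\<sigma> * cnj \<sigma> = 1"
    using False by (simp add: \<sigma>_def complex_norm_square[symmetric] divide_simps power2_eq_square)
  have c: "c = of_real (cmod c) * \<sigma>" using False by (simp add: \<sigma>_def)
  have e: "e1 * cnj e1 = 1" "e2 * cnj e2 = 1"
    using assms(1,2) by (metis complex_norm_square mult.commute one_power2 of_real_1)+
  define z where "z = of_real t * \<sigma> * e1 + of_real t * e2"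
  define w where "w = \<sigma> * (e1 * cnj e2)"
  have "(cmod z)\<^sup>2 = Re (z * cnj z)"
    by (simp add: complex_norm_square[symmetric])
  also have "z * cnj z = of_real (t * t) * ((\<sigma> * cnj \<sigma>) * (e1 * cnj e1) + e2 * cnj e2 + w + cnj w)"
    by (simp add: z_def w_def algebra_simps)
  also have "Re \<dots> = cmod c + cmod c * Re w"
    by (simp add: \<sigma> e t_def field_simps)
  also have "cmod c * Re w = Re (c * (e1 * cnj e2))"
    by (subst c) (simp add: w_def mult.assoc)
  finally show ?thesis by (simp add: z_def)
qed (simp add: t_def)

lemma monomial_plus_norm_is_square:
  assumes "\<nu> \<in> freq_box (2 * s)"
  shows "\<exists>p. trig_poly_deg s p \<and> (\<forall>x. (cmod (p x))\<^sup>2 = cmod c + Re (c * fourier_char \<nu> x))"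
proof -
  obtain \<alpha> \<beta> where \<alpha>\<beta>: "\<alpha> \<in> freq_box s" "\<beta> \<in> freq_box s" and \<nu>: "\<nu> = \<alpha> - \<beta>"
    using assms by (rule freq_box_double_split)
  define t where "t = sqrt (cmod c / 2)"
  define \<sigma> where "\<sigma> = (if c = 0 then 1 else c / cmod c)"
  define p where "p x = of_real t * \<sigma> * fourier_char \<alpha> x + of_real t * fourier_char \<beta> x" for x
  have "trig_poly_deg s p"
    unfolding trig_poly_on_freq_box_iff[symmetric] p_def
    using \<alpha>\<beta> by (intro trig_poly_on_add trig_poly_on_monomial finite_freq_box)
  moreover have "(cmod (p x))\<^sup>2 = cmod c + Re (c * fourier_char \<nu> x)" for x
    unfolding p_def t_def \<sigma>_def \<nu> fourier_char_diff by (rule norm_square_balanced_sum) simp_all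
  ultimately show ?thesis by blast
qed

lemma sos_of_F_norm_le:
  fixes R :: "real^'d \<Rightarrow> complex"
  assumes R: "trig_poly_on (freq_box (2 * s)) R" and le: "F_norm R \<le> e"
  obtains ps where "\<forall>p\<in>set ps. trig_poly_deg s p" "\<And>x. Re (R x) + e = (\<Sum>p\<leftarrow>ps. (cmod (p x))\<^sup>2)"
proof -
  define K :: "(int^'d) set" where "K = freq_box (2 * s)"
  define r where "r = fourier_coeff R"
  have "\<forall>\<nu>\<in>K. \<exists>p. trig_poly_deg s p \<and> (\<forall>x. (cmod (p x))\<^sup>2 = cmod (r \<nu>) + Re (r \<nu> * fourier_char \<nu> x))"
    unfolding K_def using monomial_plus_norm_is_square by blast
  from bchoice[OF this] obtain p where p: "\<And>\<nu>. \<nu> \<in> K \<Longrightarrow> trig_poly_deg s (p \<nu>)"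
    "\<And>\<nu> x. \<nu> \<in> K \<Longrightarrow> (cmod (p \<nu> x))\<^sup>2 = cmod (r \<nu>) + Re (r \<nu> * fourier_char \<nu> x)"
    by blast
  obtain \<nu>s where \<nu>s: "set \<nu>s = K" "distinct \<nu>s"
    using finite_distinct_list[OF finite_freq_box] unfolding K_def by blast
  define slack :: "real^'d \<Rightarrow> complex" where "slack = (\<lambda>x. of_real (sqrt (e - F_norm R)))"
  have "(\<Sum>q\<leftarrow>map p \<nu>s. (cmod (q x))\<^sup>2) = F_norm R + Re (R x)" for x
  proof -
    have "(\<Sum>q\<leftarrow>map p \<nu>s. (cmod (q x))\<^sup>2) = (\<Sum>\<nu>\<in>K. (cmod (p \<nu> x))\<^sup>2)"
      using \<nu>s by (simp add: sum_list_distinct_conv_sum_set o_def)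
    also have "\<dots> = (\<Sum>\<nu>\<in>K. cmod (r \<nu>)) + (\<Sum>\<nu>\<in>K. Re (r \<nu> * fourier_char \<nu> x))"
      by (simp add: p(2) sum.distrib)
    also have "(\<Sum>\<nu>\<in>K. cmod (r \<nu>)) = F_norm R"
      unfolding K_def r_def by (rule F_norm_trig_poly_on[OF finite_freq_box R, symmetric])
    also have "(\<Sum>\<nu>\<in>K. Re (r \<nu> * fourier_char \<nu> x)) = Re (R x)"
      unfolding trig_poly_on_fourier_expansion[OF finite_freq_box R, of x] K_def r_def
      by (simp add: Re_sum)
    finally show ?thesis .
  qed
  moreover have "(cmod (slack x))\<^sup>2 = e - F_norm R" for x
    using le by (simp add: slack_def)
  moreover have "trig_poly_deg s slack"
    unfolding slack_def trig_poly_on_freq_box_iff[symmetric]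
    by (rule trig_poly_on_const) simp_all
  ultimately show thesis
    using p(1) \<nu>s(1) by (intro that[of "slack # map p \<nu>s"]) auto
qed

lemma sos_const_le_Inf:
  assumes "\<forall>x. f x - c = (\<Sum>q\<leftarrow>qs. (cmod (q x))\<^sup>2)"
  shows "c \<le> (INF y\<in>cbox 0 One. f (y :: real^'d))"
proof (rule cINF_greatest)
  have "0 \<le> (\<Sum>q\<leftarrow>qs. (cmod (q y))\<^sup>2)" for y
    by (rule sum_list_nonneg) auto
  then show "c \<le> f y" for y
    using assms by (metis diff_ge_0_iff_ge)
qed (simp add: box_ne_empty)

lemma c_star_bounds:
  fixes f :: "real^'d \<Rightarrow> real"
  assumes "\<forall>q\<in>set qs. trig_poly_deg s q" "\<forall>x. f x - c = (\<Sum>q\<leftarrow>qs. (cmod (q x))\<^sup>2)"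
  shows "c \<le> c_star f s" "c_star f s \<le> (INF y\<in>cbox 0 One. f y)"
proof -
  define S where "S = {c. \<exists>qs. (\<forall>q\<in>set qs. trig_poly_deg s q) \<and>
      (\<forall>x. f x - c = (\<Sum>q\<leftarrow>qs. (cmod (q x))\<^sup>2))}"
  have S: "c \<in> S" using assms unfolding S_def by blast
  have upper: "c' \<le> (INF y\<in>cbox 0 One. f y)" if "c' \<in> S" for c'
    using that sos_const_le_Inf unfolding S_def by blast
  then have "bdd_above S" by (auto simp: bdd_above_def)
  then show "c \<le> c_star f s" "c_star f s \<le> (INF y\<in>cbox 0 One. f y)"
    unfolding c_star_def S_def[symmetric] using S upper by (auto intro: cSup_upper cSup_least)
qed

lemma of_real_sum_norm_square:
  "complex_of_real (\<Sum>q\<leftarrow>qs. (cmod (q x))\<^sup>2) = (\<Sum>q\<leftarrow>qs. q x * cnj (q x))"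
  by (induction qs) (simp_all add: complex_norm_square[symmetric])

theorem lemma4p1:
  fixes f :: "real^'d \<Rightarrow> real" and s :: nat and qs :: "(real^'d \<Rightarrow> complex) list"
    and \<epsilon>' :: real
  assumes "s \<ge> 1"
    and "\<exists>n. trig_poly_deg n (\<lambda>x. complex_of_real (f x))"
    and "\<And>\<omega>. sup_norm_int \<omega> > 2 * int s \<Longrightarrow> fourier_coeff (\<lambda>x. complex_of_real (f x)) \<omega> = 0"
    and "\<forall>q\<in>set qs. trig_poly_deg s q"
    and "F_norm (\<lambda>x. complex_of_real (f x - (INF y\<in>cbox 0 One. f y) - (\<Sum>q\<leftarrow>qs. (cmod (q x))\<^sup>2))) \<le> \<epsilon>'"
  shows "0 \<le> (INF y\<in>cbox 0 One. f y) - c_star f s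
         \<and> (INF y\<in>cbox 0 One. f y) - c_star f s \<le> (2 * real s + 1) ^ CARD('d) * \<epsilon>'"
proof -
  define m where "m = (INF y\<in>cbox 0 One. f y)"
  define F where "F = (\<lambda>x. complex_of_real (f x))"
  define G where "G x = complex_of_real m + (\<Sum>q\<leftarrow>qs. q x * cnj (q x))" for x
  define R where "R x = complex_of_real (f x - m - (\<Sum>q\<leftarrow>qs. (cmod (q x))\<^sup>2))" for x
  obtain n where F: "trig_poly_on (freq_box n) F"
    using assms(2) unfolding F_def trig_poly_on_freq_box_iff by blast
  have G: "trig_poly_on (freq_box (2 * s)) G"
    unfolding G_def using assms(4)
    by (intro trig_poly_on_add trig_poly_on_const trig_poly_on_sum_list trig_poly_deg_norm_square) auto
  define N where "N = max n (2 * s)"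
  have FN: "trig_poly_on (freq_box N) F" and GN: "trig_poly_on (freq_box N) G"
    using trig_poly_on_mono[OF finite_freq_box freq_box_mono F] trig_poly_on_mono[OF finite_freq_box freq_box_mono G]
    by (simp_all add: N_def)
  have R_eq: "R = (\<lambda>x. F x - G x)"
    by (simp add: fun_eq_iff R_def F_def G_def of_real_sum_norm_square)
  have R: "trig_poly_on (freq_box (2 * s)) R"
  proof (rule trig_poly_on_restrict[OF finite_freq_box finite_freq_box])
    show "trig_poly_on (freq_box N) R" unfolding R_eq by (rule trig_poly_on_diff[OF FN GN])
    show "fourier_coeff R \<nu> = 0" if "\<nu> \<in> freq_box N - freq_box (2 * s)" for \<nu>
      using that assms(3)[of \<nu>] fourier_coeff_outside_spectrum[OF finite_freq_box G, of \<nu>]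
      unfolding R_eq fourier_coeff_diff_trig_poly_on[OF finite_freq_box FN GN]
      by (simp add: F_def freq_box_def)
  qed
  have "F_norm R \<le> \<epsilon>'" using assms(5) unfolding R_def m_def .
  then obtain ps where ps: "\<forall>p\<in>set ps. trig_poly_deg s p" "\<And>x. Re (R x) + \<epsilon>' = (\<Sum>p\<leftarrow>ps. (cmod (p x))\<^sup>2)"
    using sos_of_F_norm_le[OF R] by blast
  have "\<forall>q\<in>set (qs @ ps). trig_poly_deg s q" using assms(4) ps(1) by auto
  moreover have "\<forall>x. f x - (m - \<epsilon>') = (\<Sum>q\<leftarrow>qs @ ps. (cmod (q x))\<^sup>2)"
    using ps(2) by (simp add: R_def algebra_simps)
  ultimately have "m - \<epsilon>' \<le> c_star f s" "c_star f s \<le> m"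
    unfolding m_def by (rule c_star_bounds)+
  moreover have "0 \<le> F_norm R"
    unfolding F_norm_def by (rule infsum_nonneg) simp
  then have "0 \<le> \<epsilon>'" using \<open>F_norm R \<le> \<epsilon>'\<close> by linarith
  then have "\<epsilon>' \<le> (2 * real s + 1) ^ CARD('d) * \<epsilon>'"
    using mult_right_mono[OF one_le_power[of "2 * real s + 1" "CARD('d)"]] by simp
  ultimately show ?thesis unfolding m_def by linarith
qed

end
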